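(* Let $X$ be a compact metric space with metric $d$ and let $M\ge1$. If an $M$-Lipschitz continuous map $f\colon X\to X$ satisfies $X=CR(f)$ and has the $L$-Lipschitz shadowing property for some $0<L<M^{-1}$, then $X$ is a finite set.
   Context: A map $f\colon X\to X$ is $M$-Lipschitz continuous if there is $\delta_0>0$ such that $d(f(x),f(y))\le Md(x,y)$ for all $x,y\in X$ with $d(x,y)\le\delta_0$. For $\delta>0$, a sequence $(x_i)_{i\ge0}$ is a $\delta$-pseudo orbit of $f$ if $d(f(x_i),x_{i+1})\le\delta$ for all $i\ge0$; it is $\epsilon$-shadowed by $x$ if $d(f^i(x),x_i)\le\epsilon$ for all $i\ge0$. For $L>0$, $f$ has the $L$-Lipschitz shadowing property if there is $\delta_0>0$ such that for every $0<\delta\le\delta_0$, every $\delta$-pseudo orbit of $f$ is $L\delta$-shadowed by some point of $X$. A $\delta$-chain is a finite sequence $(x_i)_{i=0}^k$, $k\ge1$, with $d(f(x_i),x_{i+1})\le\delta$ for $0\le i\le k-1$; a $\delta$-cycle is a $\delta$-chain with $x_0=x_k$. $CR(f)$ is the set of $x\in X$ such that for every $\delta>0$ there is a $\delta$-cycle with $x_0=x_k=x$. *)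

theory Defs
  imports "HOL-Analysis.Analysis"
begin

text \<open>The metric space is a subset X of a metric space type, with the induced metric.\<close>

definition M_lipschitz :: "'a::metric_space set \<Rightarrow> ('a \<Rightarrow> 'a) \<Rightarrow> real \<Rightarrow> bool" where
  "M_lipschitz X f M \<longleftrightarrow> (\<exists>\<delta>0>0. \<forall>x\<in>X. \<forall>y\<in>X. dist x y \<le> \<delta>0 \<longrightarrow> dist (f x) (f y) \<le> M * dist x y)"

definition pseudo_orbit :: "'a::metric_space set \<Rightarrow> ('a \<Rightarrow> 'a) \<Rightarrow> real \<Rightarrow> (nat \<Rightarrow> 'a) \<Rightarrow> bool" where
  "pseudo_orbit X f \<delta> xs \<longleftrightarrow> (\<forall>i. xs i \<in> X) \<and> (\<forall>i. dist (f (xs i)) (xs (Suc i)) \<le> \<delta>)"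

definition shadowed :: "('a::metric_space \<Rightarrow> 'a) \<Rightarrow> real \<Rightarrow> (nat \<Rightarrow> 'a) \<Rightarrow> 'a \<Rightarrow> bool" where
  "shadowed f \<epsilon> xs x \<longleftrightarrow> (\<forall>i. dist ((f ^^ i) x) (xs i) \<le> \<epsilon>)"

definition lipschitz_shadowing :: "'a::metric_space set \<Rightarrow> ('a \<Rightarrow> 'a) \<Rightarrow> real \<Rightarrow> bool" where
  "lipschitz_shadowing X f L \<longleftrightarrow> (\<exists>\<delta>0>0. \<forall>\<delta>. 0 < \<delta> \<and> \<delta> \<le> \<delta>0 \<longrightarrow>
      (\<forall>xs. pseudo_orbit X f \<delta> xs \<longrightarrow> (\<exists>x\<in>X. shadowed f (L * \<delta>) xs x)))"

definition delta_chain :: "'a::metric_space set \<Rightarrow> ('a \<Rightarrow> 'a) \<Rightarrow> real \<Rightarrow> (nat \<Rightarrow> 'a) \<Rightarrow> nat \<Rightarrow> bool" where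
  "delta_chain X f \<delta> xs k \<longleftrightarrow> k \<ge> 1 \<and> (\<forall>i\<le>k. xs i \<in> X) \<and> (\<forall>i<k. dist (f (xs i)) (xs (Suc i)) \<le> \<delta>)"

definition chain_recurrent_set :: "'a::metric_space set \<Rightarrow> ('a \<Rightarrow> 'a) \<Rightarrow> 'a set" where
  "chain_recurrent_set X f = {x\<in>X. \<forall>\<delta>>0. \<exists>xs k. delta_chain X f \<delta> xs k \<and> xs 0 = x \<and> xs k = x}"

end

theory Submission
  imports Defs
begin

text \<open>Write \<open>\<theta> = L M < 1\<close> and \<open>K = L / (1 - \<theta>)\<close>. Re-shadowing an orbit that starts near the
  initial point of a pseudo orbit gains a factor \<open>\<theta>\<close> each time, and a potential argument shows
  that every \<open>\<sigma>\<close>-pseudo orbit is \<open>K \<sigma>\<close>-shadowed by its own initial point. Applied to the periodic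
  pseudo orbit running around a \<open>\<delta>\<close>-cycle, this makes every point \<open>K \<delta>\<close>-almost periodic.
  Shadowing the pseudo orbit \<open>f\<^sup>-\<^sup>1 u, v, f v, \<dots>\<close> yields a point \<open>\<theta>\<close> times closer to both \<open>u\<close> and
  \<open>v\<close>, so nearby points are joined by \<open>\<epsilon>\<close>-chains for every \<open>\<epsilon> > 0\<close>. A pseudo orbit following such
  a chain from \<open>a\<close> to \<open>b\<close>, idling near each point for a multiple of an almost period of \<open>a\<close>, is
  shadowed by \<open>a\<close> itself; hence \<open>f\<^sup>N a\<close> is within \<open>O(\<epsilon>)\<close> of both \<open>a\<close> and \<open>b\<close>. So nearby points
  coincide, and a compact uniformly discrete space is finite.\<close>

lemma continuous_on_if_M_lipschitz:
  assumes "M_lipschitz X f M"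
  shows "continuous_on X f"
  unfolding continuous_on_iff
proof (intro ballI allI impI)
  obtain \<delta>0 where \<delta>0: "0 < \<delta>0"
    and lip: "\<And>x y. x \<in> X \<Longrightarrow> y \<in> X \<Longrightarrow> dist x y \<le> \<delta>0 \<Longrightarrow> dist (f x) (f y) \<le> M * dist x y"
    using assms unfolding M_lipschitz_def by blast
  fix x and e :: real assume x: "x \<in> X" and e: "0 < e"
  define d where "d = min \<delta>0 (e / (\<bar>M\<bar> + 1))"
  show "\<exists>d>0. \<forall>x'\<in>X. dist x' x < d \<longrightarrow> dist (f x') (f x) < e"
  proof (intro exI[of _ d] conjI ballI impI)
    show "0 < d" using \<delta>0 e by (simp add: d_def)
    fix x' assume x': "x' \<in> X" and close: "dist x' x < d"
    have "dist (f x') (f x) \<le> M * dist x' x"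
      using lip[OF x' x] close by (simp add: d_def)
    also have "\<dots> \<le> (\<bar>M\<bar> + 1) * dist x' x"
      by (intro mult_right_mono) auto
    also have "\<dots> < (\<bar>M\<bar> + 1) * (e / (\<bar>M\<bar> + 1))"
      using close by (intro mult_strict_left_mono) (auto simp: d_def)
    also have "\<dots> = e" by simp
    finally show "dist (f x') (f x) < e" .
  qed
qed

lemma funpow_in:
  assumes "f ` X \<subseteq> X" "x \<in> X"
  shows "(f ^^ n) x \<in> X"
  using assms by (induction n) auto

lemma continuous_on_funpow:
  assumes "f ` X \<subseteq> X" "continuous_on X f"
  shows "continuous_on X (f ^^ n)"
proof (induction n)
  case 0
  then show ?case by (simp add: continuous_on_id)
next
  case (Suc n)
  have "continuous_on ((f ^^ n) ` X) f"
    using assms funpow_in[OF assms(1)] by (blast intro: continuous_on_subset)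
  then show ?case
    unfolding funpow.simps(2) by (rule continuous_on_compose[OF Suc])
qed

lemma chain_recurrent_set_subset_closure_image:
  "chain_recurrent_set X f \<subseteq> closure (f ` X)"
proof
  fix x assume "x \<in> chain_recurrent_set X f"
  then have cycles: "\<exists>xs k. delta_chain X f \<delta> xs k \<and> xs 0 = x \<and> xs k = x" if "0 < \<delta>" for \<delta>
    using that unfolding chain_recurrent_set_def by blast
  show "x \<in> closure (f ` X)"
    unfolding closure_approachable_le
  proof (intro allI impI)
    fix \<epsilon> :: real assume "0 < \<epsilon>"
    then obtain xs k where "delta_chain X f \<epsilon> xs k" and "xs k = x"
      using cycles by blast
    then have "xs (k - 1) \<in> X" "dist (f (xs (k - 1))) x \<le> \<epsilon>"
      unfolding delta_chain_def by (auto dest!: spec[of _ "k - 1"])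
    then show "\<exists>y\<in>f ` X. dist y x \<le> \<epsilon>" by blast
  qed
qed

lemma pseudo_orbit_of_cycle:
  assumes "delta_chain X f \<delta> c k" "c k = c 0"
  shows "pseudo_orbit X f \<delta> (\<lambda>i. c (i mod k))"
  unfolding pseudo_orbit_def
proof (intro conjI allI)
  have k: "0 < k" and in_X: "\<And>i. i \<le> k \<Longrightarrow> c i \<in> X"
    and steps: "\<And>i. i < k \<Longrightarrow> dist (f (c i)) (c (Suc i)) \<le> \<delta>"
    using assms(1) unfolding delta_chain_def by auto
  fix i
  show "c (i mod k) \<in> X" using k in_X by simp
  have "c (Suc i mod k) = c (Suc (i mod k))"
    using assms(2) k by (simp add: mod_Suc)
  then show "dist (f (c (i mod k))) (c (Suc i mod k)) \<le> \<delta>"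
    using k steps by simp
qed

lemma pseudo_orbit_orbit:
  assumes "f ` X \<subseteq> X" "x \<in> X" "0 \<le> \<delta>"
  shows "pseudo_orbit X f \<delta> (\<lambda>i. (f ^^ i) x)"
  using assms funpow_in[OF assms(1,2)] unfolding pseudo_orbit_def by simp

lemma pseudo_orbit_splice:
  assumes "pseudo_orbit X f \<delta> xs" "pseudo_orbit X f \<delta> ys" "dist (f (xs n)) (ys 0) \<le> \<delta>"
  shows "pseudo_orbit X f \<delta> (\<lambda>i. if i \<le> n then xs i else ys (i - Suc n))"
  unfolding pseudo_orbit_def
proof (intro conjI allI)
  fix i
  show "(if i \<le> n then xs i else ys (i - Suc n)) \<in> X"
    using assms(1,2) unfolding pseudo_orbit_def by simp
  consider "i < n" | "i = n" | "n < i" by linarith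
  then show "dist (f (if i \<le> n then xs i else ys (i - Suc n)))
      (if Suc i \<le> n then xs (Suc i) else ys (Suc i - Suc n)) \<le> \<delta>"
  proof cases
    case 3
    then have "Suc i - Suc n = Suc (i - Suc n)" by simp
    then show ?thesis using 3 assms(2) unfolding pseudo_orbit_def by simp
  qed (use assms in \<open>auto simp: pseudo_orbit_def\<close>)
qed

inductive eps_chainable :: "'a::metric_space set \<Rightarrow> real \<Rightarrow> 'a \<Rightarrow> 'a \<Rightarrow> bool"
  for X \<epsilon> where
  refl: "a \<in> X \<Longrightarrow> eps_chainable X \<epsilon> a a"
| step: "eps_chainable X \<epsilon> a b \<Longrightarrow> c \<in> X \<Longrightarrow> dist b c \<le> \<epsilon> \<Longrightarrow> eps_chainable X \<epsilon> a c"

lemma eps_chainable_trans: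
  assumes "eps_chainable X \<epsilon> a b" "eps_chainable X \<epsilon> b c"
  shows "eps_chainable X \<epsilon> a c"
  using assms(2,1) by (induction rule: eps_chainable.induct) (auto intro: eps_chainable.step)

lemma eps_chainable_mono:
  assumes "eps_chainable X \<epsilon> a b" "\<epsilon> \<le> \<epsilon>'"
  shows "eps_chainable X \<epsilon>' a b"
  using assms by (induction rule: eps_chainable.induct) (auto intro: eps_chainable.intros)

lemma pseudo_orbit_along_eps_chain:
  assumes "f ` X \<subseteq> X" and "eps_chainable X \<epsilon> a b" "0 \<le> \<epsilon>" "0 \<le> \<rho>" "0 < k"
    and almost_periodic: "\<And>q. q \<in> X \<Longrightarrow> \<exists>p>0. \<forall>t. dist ((f ^^ (t * p)) q) q \<le> \<rho>"
  shows "\<exists>xs N. pseudo_orbit X f (\<rho> + \<epsilon>) xs \<and> xs 0 = a \<and> xs N = b \<and> k dvd N"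
  using assms(2)
proof (induction rule: eps_chainable.induct)
  case (refl a)
  have "pseudo_orbit X f (\<rho> + \<epsilon>) (\<lambda>i. (f ^^ i) a)"
    using assms(1,3,4) refl by (intro pseudo_orbit_orbit) auto
  then show ?case by (intro exI[of _ "\<lambda>i. (f ^^ i) a"] exI[of _ 0]) simp
next
  case (step a b c)
  then obtain xs N where xs: "pseudo_orbit X f (\<rho> + \<epsilon>) xs" "xs 0 = a" "xs N = b" "k dvd N"
    by blast
  have b: "b \<in> X" using xs unfolding pseudo_orbit_def by metis
  obtain p where "0 < p" and p: "\<And>t. dist ((f ^^ (t * p)) b) b \<le> \<rho>"
    using almost_periodic[OF b] by blast
  define T where "T = k * p"
  have "0 < T" using \<open>0 < k\<close> \<open>0 < p\<close> by (simp add: T_def)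
  have return: "dist ((f ^^ T) b) c \<le> \<rho> + \<epsilon>"
    using p[of k] step.hyps(3) dist_triangle[of "(f ^^ T) b" c b] by (simp add: T_def mult.commute)
  define ys where "ys = (\<lambda>i. if i \<le> N then xs i else (f ^^ (i - Suc N)) (f b))"
  have ys: "pseudo_orbit X f (\<rho> + \<epsilon>) ys"
    unfolding ys_def using assms(1,3,4) b xs
    by (intro pseudo_orbit_splice pseudo_orbit_orbit) auto
  have ys_orbit: "ys (N + j) = (f ^^ j) b" for j
    using xs(3) by (cases j) (auto simp: ys_def funpow_swap1)
  define zs where "zs = (\<lambda>i. if i \<le> N + (T - 1) then ys i else (f ^^ (i - Suc (N + (T - 1)))) c)"
  have "f (ys (N + (T - 1))) = (f ^^ T) b"
    using \<open>0 < T\<close> ys_orbit by (metis Suc_diff_1 funpow.simps(2) o_apply)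
  then have "pseudo_orbit X f (\<rho> + \<epsilon>) zs"
    unfolding zs_def using assms(1,3,4) step.hyps(2) ys return
    by (intro pseudo_orbit_splice pseudo_orbit_orbit) auto
  moreover have "zs 0 = a" "zs (N + T) = c"
    using xs(2) \<open>0 < T\<close> by (auto simp: zs_def ys_def)
  moreover have "k dvd N + T" using xs(4) by (simp add: T_def)
  ultimately show ?case by blast
qed

lemma dist_le_at_limit:
  assumes "continuous_on X g" "a \<in> X"
    and approx: "\<And>e. 0 < e \<Longrightarrow> \<exists>w\<in>X. dist w a < e \<and> dist (g w) y \<le> B"
  shows "dist (g a) y \<le> B"
proof (rule field_le_epsilon)
  fix e :: real assume "0 < e"
  then obtain d where "0 < d" and d: "\<And>w. w \<in> X \<Longrightarrow> dist w a < d \<Longrightarrow> dist (g w) (g a) < e"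
    using assms(1,2) unfolding continuous_on_iff by blast
  then obtain w where "w \<in> X" "dist w a < d" "dist (g w) y \<le> B"
    using approx by blast
  then have "dist (g a) (g w) < e"
    using d dist_commute[of "g a"] by metis
  then show "dist (g a) y \<le> B + e"
    using \<open>dist (g w) y \<le> B\<close> dist_triangle[of "g a" y "g w"] by simp
qed

lemma nonpos_if_le_small_multiples:
  fixes d C \<eta> :: real
  assumes "0 < \<eta>" "\<And>\<epsilon>. 0 < \<epsilon> \<Longrightarrow> \<epsilon> \<le> \<eta> \<Longrightarrow> d \<le> C * \<epsilon>"
  shows "d \<le> 0"
proof (rule field_le_epsilon)
  fix e :: real assume "0 < e"
  define \<epsilon> where "\<epsilon> = min \<eta> (e / (\<bar>C\<bar> + 1))"
  have "d \<le> C * \<epsilon>" using assms \<open>0 < e\<close> by (simp add: \<epsilon>_def)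
  also have "\<dots> \<le> (\<bar>C\<bar> + 1) * \<epsilon>"
    using assms(1) \<open>0 < e\<close> by (intro mult_right_mono) (auto simp: \<epsilon>_def)
  also have "\<dots> \<le> (\<bar>C\<bar> + 1) * (e / (\<bar>C\<bar> + 1))"
    by (intro mult_left_mono) (auto simp: \<epsilon>_def)
  finally show "d \<le> 0 + e" by simp
qed

locale lipschitz_shadowing_map =
  fixes X :: "'a::metric_space set" and f :: "'a \<Rightarrow> 'a" and M L \<delta>0 :: real
  assumes maps_into: "f ` X \<subseteq> X"
    and M_ge_1: "1 \<le> M" and L_pos: "0 < L" and LM_less_1: "L * M < 1"
    and \<delta>0_pos: "0 < \<delta>0"
    and lipschitz: "\<And>x y. x \<in> X \<Longrightarrow> y \<in> X \<Longrightarrow> dist x y \<le> \<delta>0 \<Longrightarrow> dist (f x) (f y) \<le> M * dist x y"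
    and shadowing: "\<And>\<delta> xs. 0 < \<delta> \<Longrightarrow> \<delta> \<le> \<delta>0 \<Longrightarrow> pseudo_orbit X f \<delta> xs \<Longrightarrow>
      \<exists>z\<in>X. shadowed f (L * \<delta>) xs z"
begin

definition K :: real where "K = L / (1 - L * M)"

lemma LM_pos: "0 < L * M"
  using L_pos M_ge_1 by simp

lemma L_le_LM: "L \<le> L * M"
  using L_pos M_ge_1 by simp

lemma K_nonneg: "0 \<le> K"
  using L_pos LM_less_1 by (simp add: K_def)

lemma continuous_on_iterate: "continuous_on X (f ^^ n)"
proof -
  have "M_lipschitz X f M"
    unfolding M_lipschitz_def using \<delta>0_pos lipschitz by blast
  then show ?thesis
    by (intro continuous_on_funpow maps_into continuous_on_if_M_lipschitz)
qed

text \<open>The point \<open>w'\<close> shadows the pseudo orbit \<open>a, f w, f\<^sup>2 w, \<dots>\<close>.\<close>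

lemma reshadow_near_point:
  assumes "a \<in> X" "w \<in> X" "M * dist w a \<le> \<delta>0"
  obtains w' where "w' \<in> X" "dist w' a \<le> L * M * dist w a"
    "\<And>j. 0 < j \<Longrightarrow> dist ((f ^^ j) w') ((f ^^ j) w) \<le> L * M * dist w a"
proof (cases "w = a")
  case True
  then show ?thesis using that[of a] assms(1) by simp
next
  case False
  define r where "r = dist w a"
  have "0 < r" using False by (simp add: r_def)
  define ys where "ys = (\<lambda>j. if j = 0 then a else (f ^^ j) w)"
  have "r \<le> M * r" using M_ge_1 \<open>0 < r\<close> by simp
  then have "dist (f a) (f w) \<le> M * r"
    using lipschitz[OF assms(1,2)] assms(3) by (simp add: r_def dist_commute)
  then have "pseudo_orbit X f (M * r) ys"
    using assms(1,2) funpow_in[OF maps_into] \<open>0 < r\<close> M_ge_1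
    unfolding pseudo_orbit_def ys_def by auto
  then obtain w' where "w' \<in> X" and w': "\<And>j. dist ((f ^^ j) w') (ys j) \<le> L * M * r"
    using shadowing[of "M * r"] \<open>0 < r\<close> M_ge_1 assms(3)
    unfolding shadowed_def r_def by (auto simp: mult.assoc)
  show ?thesis
  proof (rule that[OF \<open>w' \<in> X\<close>])
    show "dist w' a \<le> L * M * dist w a" using w'[of 0] by (simp add: ys_def r_def)
    fix j :: nat assume "0 < j"
    then show "dist ((f ^^ j) w') ((f ^^ j) w) \<le> L * M * dist w a"
      using w'[of j] by (simp add: ys_def r_def)
  qed
qed

text \<open>The potential \<open>dist (f\<^sup>i w) (xs i) + c \<cdot> dist w (xs 0)\<close> with \<open>c = L M / (1 - L M)\<close> does not
  increase under reshadowing, while \<open>w\<close> converges to \<open>xs 0\<close>.\<close>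

lemma pseudo_orbit_shadowed_by_initial_point:
  assumes xs: "pseudo_orbit X f \<sigma> xs" and "0 < \<sigma>" "\<sigma> \<le> \<delta>0"
  shows "dist ((f ^^ i) (xs 0)) (xs i) \<le> K * \<sigma>"
proof -
  define \<theta> where "\<theta> = L * M"
  define c where "c = \<theta> / (1 - \<theta>)"
  define a where "a = xs 0"
  define \<Phi> where "\<Phi> w = dist ((f ^^ i) w) (xs i) + c * dist w a" for w
  have "0 < \<theta>" "\<theta> < 1" "L \<le> \<theta>"
    using LM_pos LM_less_1 L_le_LM by (simp_all add: \<theta>_def)
  then have "0 \<le> c" by (simp add: c_def)
  have K_eq: "K * \<sigma> = (1 + c) * (L * \<sigma>)" and c_eq: "\<theta> + c * \<theta> = c"
    using \<open>\<theta> < 1\<close> by (simp_all add: K_def c_def \<theta>_def field_simps)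
  have "a \<in> X" using xs by (simp add: a_def pseudo_orbit_def)
  have approx: "\<exists>w\<in>X. \<Phi> w \<le> K * \<sigma> \<and> dist w a \<le> \<theta> ^ n * (L * \<sigma>)" for n
  proof (induction n)
    case 0
    obtain z where "z \<in> X" and z: "\<And>j. dist ((f ^^ j) z) (xs j) \<le> L * \<sigma>"
      using shadowing[OF \<open>0 < \<sigma>\<close> \<open>\<sigma> \<le> \<delta>0\<close> xs] unfolding shadowed_def by blast
    have "dist z a \<le> L * \<sigma>" using z[of 0] by (simp add: a_def)
    then have "\<Phi> z \<le> K * \<sigma>"
      using z[of i] mult_left_mono[OF _ \<open>0 \<le> c\<close>] unfolding \<Phi>_def K_eq
      by (simp add: ring_distribs add_mono)
    then show ?case using \<open>z \<in> X\<close> \<open>dist z a \<le> L * \<sigma>\<close> by auto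
  next
    case (Suc n)
    then obtain w where "w \<in> X" and \<Phi>w: "\<Phi> w \<le> K * \<sigma>" and w: "dist w a \<le> \<theta> ^ n * (L * \<sigma>)"
      by blast
    define r where "r = dist w a"
    have "\<theta> ^ n * (L * \<sigma>) \<le> L * \<sigma>"
      using \<open>0 < \<theta>\<close> \<open>\<theta> < 1\<close> L_pos \<open>0 < \<sigma>\<close> by (intro mult_left_le_one_le power_le_one) auto
    then have "r \<le> L * \<sigma>" using w by (simp add: r_def)
    have "\<theta> * r \<le> r" using \<open>0 < \<theta>\<close> \<open>\<theta> < 1\<close> by (simp add: r_def mult_left_le_one_le)
    have "M * r \<le> \<theta> * \<sigma>"
      using mult_left_mono[OF \<open>r \<le> L * \<sigma>\<close>, of M] M_ge_1 by (simp add: \<theta>_def mult_ac)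
    also have "\<dots> \<le> \<delta>0"
      using mult_left_le_one_le[of \<sigma> \<theta>] \<open>0 < \<theta>\<close> \<open>\<theta> < 1\<close> \<open>0 < \<sigma>\<close> \<open>\<sigma> \<le> \<delta>0\<close> by linarith
    finally obtain w' where "w' \<in> X" and w'a: "dist w' a \<le> \<theta> * r"
      and w'w: "\<And>j. 0 < j \<Longrightarrow> dist ((f ^^ j) w') ((f ^^ j) w) \<le> \<theta> * r"
      using reshadow_near_point[OF \<open>a \<in> X\<close> \<open>w \<in> X\<close>] unfolding r_def \<theta>_def by blast
    have "\<Phi> w' \<le> K * \<sigma>"
    proof (cases "i = 0")
      case True
      have "\<Phi> w' = (1 + c) * dist w' a" by (simp add: \<Phi>_def True a_def algebra_simps)
      also have "\<dots> \<le> (1 + c) * (L * \<sigma>)"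
        using w'a \<open>\<theta> * r \<le> r\<close> \<open>r \<le> L * \<sigma>\<close> \<open>0 \<le> c\<close> by (intro mult_left_mono) auto
      finally show ?thesis by (simp only: K_eq)
    next
      case False
      have "dist ((f ^^ i) w') (xs i) \<le> \<theta> * r + dist ((f ^^ i) w) (xs i)"
        using w'w[of i] False dist_triangle[of "(f ^^ i) w'" "xs i" "(f ^^ i) w"] by simp
      moreover have "c * dist w' a \<le> c * (\<theta> * r)" using w'a \<open>0 \<le> c\<close> by (rule mult_left_mono)
      ultimately have "\<Phi> w' \<le> \<Phi> w + (\<theta> + c * \<theta> - c) * r"
        unfolding \<Phi>_def r_def by (simp add: algebra_simps)
      then show ?thesis using \<Phi>w c_eq by simp
    qed
    moreover have "dist w' a \<le> \<theta> ^ Suc n * (L * \<sigma>)"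
      using order_trans[OF w'a mult_left_mono[OF w[folded r_def]]] \<open>0 < \<theta>\<close> by (simp add: mult.assoc)
    ultimately show ?case using \<open>w' \<in> X\<close> by blast
  qed
  show ?thesis
    unfolding a_def[symmetric]
  proof (rule dist_le_at_limit[OF continuous_on_iterate \<open>a \<in> X\<close>])
    fix e :: real assume "0 < e"
    obtain n where "\<theta> ^ n < e / (L * \<sigma>)"
      using real_arch_pow_inv \<open>0 < e\<close> L_pos \<open>0 < \<sigma>\<close> \<open>\<theta> < 1\<close> by (metis divide_pos_pos mult_pos_pos)
    then have "\<theta> ^ n * (L * \<sigma>) < e" using L_pos \<open>0 < \<sigma>\<close> by (simp add: field_simps)
    moreover obtain w where "w \<in> X" "\<Phi> w \<le> K * \<sigma>" "dist w a \<le> \<theta> ^ n * (L * \<sigma>)"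
      using approx by blast
    moreover have "0 \<le> c * dist w a" using \<open>0 \<le> c\<close> by simp
    ultimately show "\<exists>w\<in>X. dist w a < e \<and> dist ((f ^^ i) w) (xs i) \<le> K * \<sigma>"
      unfolding \<Phi>_def by force
  qed
qed

end

locale chain_recurrent_lipschitz_shadowing_map = lipschitz_shadowing_map +
  assumes compact: "compact X" and chain_recurrent: "X = chain_recurrent_set X f"
begin

lemma subset_image: "X \<subseteq> f ` X"
proof -
  have "closed (f ` X)"
    using compact continuous_on_iterate[of 1]
    by (intro compact_imp_closed compact_continuous_image) simp_all
  then show ?thesis
    using chain_recurrent chain_recurrent_set_subset_closure_image[of X f]
    by (simp add: closure_closed)
qed

lemma almost_periodic:
  assumes "p \<in> X" "0 < \<delta>" "\<delta> \<le> \<delta>0"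
  shows "\<exists>k>0. \<forall>t. dist ((f ^^ (t * k)) p) p \<le> K * \<delta>"
proof -
  obtain c k where c: "delta_chain X f \<delta> c k" "c 0 = p" "c k = p"
    using assms(1,2) chain_recurrent unfolding chain_recurrent_set_def by blast
  then have "0 < k" by (simp add: delta_chain_def)
  have periodic: "pseudo_orbit X f \<delta> (\<lambda>i. c (i mod k))"
    using c by (intro pseudo_orbit_of_cycle) simp_all
  have "dist ((f ^^ (t * k)) p) p \<le> K * \<delta>" for t
    using pseudo_orbit_shadowed_by_initial_point[OF periodic assms(2,3), of "t * k"] c(2) by simp
  then show ?thesis using \<open>0 < k\<close> by blast
qed

lemma shadowing_midpoint:
  assumes u: "u \<in> X" and v: "v \<in> X" and close: "dist u v \<le> \<delta>0"
  shows "\<exists>p\<in>X. dist u p \<le> L * M * dist u v \<and> dist p v \<le> L * M * dist u v"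
proof (cases "u = v")
  case True
  then show ?thesis using u by auto
next
  case False
  define d where "d = dist u v"
  have "0 < d" using False by (simp add: d_def)
  obtain w where "w \<in> X" "f w = u" using subset_image u by blast
  define ys where "ys = (\<lambda>j. if j = 0 then w else (f ^^ (j - 1)) v)"
  have "pseudo_orbit X f d ys"
    unfolding pseudo_orbit_def
  proof (intro conjI allI)
    fix j
    show "ys j \<in> X" using \<open>w \<in> X\<close> funpow_in[OF maps_into v] by (simp add: ys_def)
    show "dist (f (ys j)) (ys (Suc j)) \<le> d"
      using \<open>f w = u\<close> \<open>0 < d\<close> by (cases j) (simp_all add: ys_def d_def)
  qed
  then obtain z where "z \<in> X" and z: "\<And>j. dist ((f ^^ j) z) (ys j) \<le> L * d"
    using shadowing[of d] \<open>0 < d\<close> close unfolding shadowed_def d_def by blast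
  have "L * d \<le> d" using \<open>0 < d\<close> L_le_LM LM_less_1 by simp
  moreover have "dist z w \<le> L * d" using z[of 0] by (simp add: ys_def)
  ultimately have "dist (f z) (f w) \<le> M * dist z w"
    using lipschitz[OF \<open>z \<in> X\<close> \<open>w \<in> X\<close>] close by (simp add: d_def)
  also have "\<dots> \<le> M * (L * d)"
    using \<open>dist z w \<le> L * d\<close> M_ge_1 by (simp add: mult_left_mono)
  finally have "dist (f z) u \<le> M * (L * d)" using \<open>f w = u\<close> by simp
  moreover have "dist (f z) v \<le> L * M * d"
    using z[of 1] mult_right_mono[OF L_le_LM, of d] \<open>0 < d\<close> by (simp add: ys_def)
  ultimately show ?thesis
    using maps_into \<open>z \<in> X\<close> by (intro bexI[of _ "f z"]) (auto simp: d_def dist_commute mult_ac)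
qed

lemma eps_chainable_iterated_midpoints:
  assumes "u \<in> X" "v \<in> X" "dist u v \<le> \<delta>0"
  shows "eps_chainable X ((L * M) ^ n * dist u v) u v"
  using assms
proof (induction n arbitrary: u v)
  case 0
  then show ?case by (auto intro: eps_chainable.intros)
next
  case (Suc n)
  obtain p where "p \<in> X" and up: "dist u p \<le> L * M * dist u v" and pv: "dist p v \<le> L * M * dist u v"
    using shadowing_midpoint[OF Suc.prems] by blast
  have "L * M * dist u v \<le> \<delta>0"
    using Suc.prems(3) LM_less_1 LM_pos by (smt (verit) mult_left_le_one_le zero_le_dist)
  then have "eps_chainable X ((L * M) ^ n * dist u p) u p" "eps_chainable X ((L * M) ^ n * dist p v) p v"
    using Suc.IH \<open>p \<in> X\<close> Suc.prems up pv by auto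
  moreover have "(L * M) ^ n * dist u p \<le> (L * M) ^ Suc n * dist u v"
    "(L * M) ^ n * dist p v \<le> (L * M) ^ Suc n * dist u v"
    using up pv LM_pos by (simp_all add: mult_left_mono mult.assoc)
  ultimately show ?case
    by (metis eps_chainable_mono eps_chainable_trans)
qed

lemma eps_chainable_if_close:
  assumes "u \<in> X" "v \<in> X" "dist u v \<le> \<delta>0" "0 < \<epsilon>"
  shows "eps_chainable X \<epsilon> u v"
proof -
  obtain n where "(L * M) ^ n < \<epsilon> / \<delta>0"
    using real_arch_pow_inv assms(4) \<delta>0_pos LM_less_1 by (metis divide_pos_pos)
  then have "(L * M) ^ n * dist u v \<le> \<epsilon>"
    using assms(3) \<delta>0_pos LM_pos
    by (smt (verit) mult_left_mono pos_divide_less_eq zero_le_power)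
  then show ?thesis
    using eps_chainable_iterated_midpoints[OF assms(1-3)] eps_chainable_mono by blast
qed

lemma dist_le_multiple_of_small:
  assumes "a \<in> X" "b \<in> X" "dist a b \<le> \<delta>0" "0 < \<epsilon>" "(K + 1) * \<epsilon> \<le> \<delta>0"
  shows "dist a b \<le> (K + K * (K + 1)) * \<epsilon>"
proof -
  have "0 \<le> K * \<epsilon>" using K_nonneg assms(4) by simp
  then have "0 < (K + 1) * \<epsilon>" "\<epsilon> \<le> \<delta>0" using assms(4,5) by (simp_all add: distrib_right)
  have almost_periodic_all: "\<exists>p>0. \<forall>t. dist ((f ^^ (t * p)) q) q \<le> K * \<epsilon>" if "q \<in> X" for q
    using almost_periodic[OF that \<open>0 < \<epsilon>\<close> \<open>\<epsilon> \<le> \<delta>0\<close>] .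
  then obtain k where "0 < k" and k: "\<And>t. dist ((f ^^ (t * k)) a) a \<le> K * \<epsilon>"
    using assms(1) by blast
  obtain xs N where xs: "pseudo_orbit X f (K * \<epsilon> + \<epsilon>) xs" "xs 0 = a" "xs N = b" "k dvd N"
    using pseudo_orbit_along_eps_chain[OF maps_into eps_chainable_if_close[OF assms(1-4)]
        less_imp_le[OF \<open>0 < \<epsilon>\<close>] \<open>0 \<le> K * \<epsilon>\<close> \<open>0 < k\<close> almost_periodic_all]
    by blast
  have "dist ((f ^^ N) a) b \<le> K * ((K + 1) * \<epsilon>)"
    using pseudo_orbit_shadowed_by_initial_point[of "(K + 1) * \<epsilon>" xs N] xs
      \<open>0 < (K + 1) * \<epsilon>\<close> assms(5) by (simp add: distrib_right)
  moreover obtain t where "N = t * k" using xs(4) by (metis dvd_def mult.commute)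
  then have "dist ((f ^^ N) a) a \<le> K * \<epsilon>" using k by simp
  ultimately have "dist a b \<le> K * \<epsilon> + K * ((K + 1) * \<epsilon>)"
    using dist_triangle[of a b "(f ^^ N) a"] dist_commute[of a "(f ^^ N) a"] by linarith
  then show ?thesis by (simp add: algebra_simps)
qed

lemma uniform_discrete: "uniform_discrete X"
proof (rule uniformI1[OF \<delta>0_pos])
  fix a b assume "a \<in> X" "b \<in> X" "dist a b < \<delta>0"
  have "dist a b \<le> 0"
  proof (rule nonpos_if_le_small_multiples)
    show "0 < \<delta>0 / (K + 1)" using \<delta>0_pos K_nonneg by simp
    fix \<epsilon> assume "0 < \<epsilon>" "\<epsilon> \<le> \<delta>0 / (K + 1)"
    then show "dist a b \<le> (K + K * (K + 1)) * \<epsilon>"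
      using dist_le_multiple_of_small \<open>a \<in> X\<close> \<open>b \<in> X\<close> \<open>dist a b < \<delta>0\<close> K_nonneg
      by (simp add: pos_le_divide_eq mult.commute)
  qed
  then show "a = b" by simp
qed

lemma finite_space: "finite X"
  using uniform_discrete compact uniform_discrete_imp_discrete discrete_compact_finite_iff by blast

end

theorem theorem1p3:
  fixes X :: "'a::metric_space set" and f :: "'a \<Rightarrow> 'a" and M L :: real
  assumes "compact X"
    and "f ` X \<subseteq> X"
    and "M \<ge> 1"
    and "M_lipschitz X f M"
    and "X = chain_recurrent_set X f"
    and "0 < L" and "L < 1 / M"
    and "lipschitz_shadowing X f L"
  shows "finite X"
proof -
  obtain \<delta>l where "0 < \<delta>l"
    and "\<forall>x\<in>X. \<forall>y\<in>X. dist x y \<le> \<delta>l \<longrightarrow> dist (f x) (f y) \<le> M * dist x y"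
    using assms(4) unfolding M_lipschitz_def by blast
  moreover obtain \<delta>s where "0 < \<delta>s" and "\<forall>\<delta>. 0 < \<delta> \<and> \<delta> \<le> \<delta>s \<longrightarrow>
      (\<forall>xs. pseudo_orbit X f \<delta> xs \<longrightarrow> (\<exists>x\<in>X. shadowed f (L * \<delta>) xs x))"
    using assms(8) unfolding lipschitz_shadowing_def by blast
  moreover have "L * M < 1" using assms(3,7) by (simp add: pos_less_divide_eq)
  ultimately interpret chain_recurrent_lipschitz_shadowing_map X f M L "min \<delta>l \<delta>s"
    using assms by unfold_locales auto
  show ?thesis by (rule finite_space)
qed

end
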